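(* For all integers $n\ge0$ and $j$ with $0\le 2j\le n$, $$f(n,j)=\sum_{i=0}^{j}p(i)\,p(j-i,\,n-2j).$$ Equivalently, the set of partitions $\lambda$ of $n$ with $a_2+a_4+\dots=j$ is in bijection with the set of ordered pairs of partitions $(\alpha,\beta)$ with $|\alpha|+|\beta|=j$ and $\beta$ having at most $n-2j$ parts; such a bijection is given by $\lambda=(a_1,\dots,a_r)\mapsto(\alpha,\beta)$ with $\alpha=(1^{a_2-a_3}2^{a_4-a_5}3^{a_6-a_7}\cdots)$ and $\beta=(1^{a_3-a_4}2^{a_5-a_6}3^{a_7-a_8}\cdots)$, where $a_i=0$ for $i>r$ and $k^{e}$ denotes $e$ copies of the part $k$.
   Context: A partition $\lambda$ of $n$ is written $n=a_1+\dots+a_r$ with $a_1\ge\dots\ge a_r\ge1$. $f(n,j)$ denotes the number of partitions of $n$ with $a_2+a_4+a_6+\dots=j$. $p(i)$ is the number of partitions of $i$ ($p(0)=1$), and $p(N,k)$ is the number of partitions of $N$ into at most $k$ parts ($p(0,k)=1$ for $k\ge0$). *)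

theory Defs
  imports Main
begin

definition is_partition :: "nat list \<Rightarrow> bool" where
  "is_partition xs \<longleftrightarrow> sorted_wrt (\<ge>) xs \<and> (\<forall>x\<in>set xs. 0 < x)"

definition partitions :: "nat \<Rightarrow> nat list set" where
  "partitions n = {xs. is_partition xs \<and> sum_list xs = n}"

definition p :: "nat \<Rightarrow> nat" where
  "p i = card (partitions i)"

definition p_at_most :: "nat \<Rightarrow> nat \<Rightarrow> nat" where
  "p_at_most N k = card {xs \<in> partitions N. length xs \<le> k}"

definition part_at :: "nat list \<Rightarrow> nat \<Rightarrow> nat" where
  "part_at xs i = (if 1 \<le> i \<and> i \<le> length xs then xs ! (i - 1) else 0)"

definition even_part_sum :: "nat list \<Rightarrow> nat" where
  "even_part_sum xs = (\<Sum>k = 1..length xs. part_at xs (2 * k))"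

definition F :: "nat \<Rightarrow> nat \<Rightarrow> nat list set" where
  "F n j = {xs \<in> partitions n. even_part_sum xs = j}"

definition f :: "nat \<Rightarrow> nat \<Rightarrow> nat" where
  "f n j = card (F n j)"

definition from_mult :: "nat \<Rightarrow> (nat \<Rightarrow> nat) \<Rightarrow> nat list" where
  "from_mult K m = rev (concat (map (\<lambda>k. replicate (m k) k) [1..<K + 1]))"

text \<open>alpha = (1^{a_2-a_3} 2^{a_4-a_5} ...), beta = (1^{a_3-a_4} 2^{a_5-a_6} ...).
  All multiplicities with 2k > r vanish, so K = r suffices.\<close>
definition alpha_of :: "nat list \<Rightarrow> nat list" where
  "alpha_of xs = from_mult (length xs)
     (\<lambda>k. part_at xs (2 * k) - part_at xs (2 * k + 1))"

definition beta_of :: "nat list \<Rightarrow> nat list" where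
  "beta_of xs = from_mult (length xs)
     (\<lambda>k. part_at xs (2 * k + 1) - part_at xs (2 * k + 2))"

definition pair_target :: "nat \<Rightarrow> nat \<Rightarrow> (nat list \<times> nat list) set" where
  "pair_target n j = {(\<alpha>, \<beta>). is_partition \<alpha> \<and> is_partition \<beta> \<and>
      sum_list \<alpha> + sum_list \<beta> = j \<and> length \<beta> \<le> n - 2 * j}"

end

theory Submission
  imports Defs "HOL-Library.Multiset"
begin

text \<open>Write d_l = a_l - a_(l+1) for l \<ge> 1. Abel summation gives n = \<Sum>_l l d_l and
  a_2 + a_4 + ... = \<Sum>_k k (d_(2k) + d_(2k+1)), while \<alpha> and \<beta> have the multiplicities
  d_2, d_4, ... and d_3, d_5, ... Hence |\<alpha>| + |\<beta>| = j and n = d_1 + 2j + length \<beta>.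
  A partition is determined by its d_l, so \<lambda> \<mapsto> (\<alpha>, \<beta>) is injective on F n j, and an
  admissible pair (\<alpha>, \<beta>) is the image of the partition with these multiplicities and
  d_1 = n - 2j - length \<beta>. Counting the pairs by |\<alpha>| gives the formula.\<close>

lemma part_at_0 [simp]: "part_at xs 0 = 0"
  by (simp add: part_at_def)

lemma part_at_beyond_length: "length xs < i \<Longrightarrow> part_at xs i = 0"
  by (simp add: part_at_def)

lemma part_at_pos: "is_partition xs \<Longrightarrow> 1 \<le> i \<Longrightarrow> i \<le> length xs \<Longrightarrow> 0 < part_at xs i"
  by (auto simp: part_at_def is_partition_def)

lemma part_at_antimono:
  assumes "is_partition xs" "1 \<le> i" "i \<le> i'"
  shows "part_at xs i' \<le> part_at xs i"
proof (cases "i' \<le> length xs \<and> i < i'")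
  case True
  then have "xs ! (i' - 1) \<le> xs ! (i - 1)"
    using assms unfolding is_partition_def sorted_wrt_iff_nth_less by auto
  then show ?thesis using True assms(2) by (simp add: part_at_def)
qed (use assms in \<open>auto simp: part_at_beyond_length\<close>)

lemma partition_eqI_part_at:
  assumes "is_partition xs" "is_partition ys" "\<And>i. 1 \<le> i \<Longrightarrow> part_at xs i = part_at ys i"
  shows "xs = ys"
proof -
  have length_le: "length xs \<le> length ys"
    if "is_partition xs" "\<And>i. 1 \<le> i \<Longrightarrow> part_at xs i = part_at ys i" for xs ys :: "nat list"
    using that part_at_pos[OF that(1), of "length xs"] part_at_beyond_length[of ys "length xs"]
    by (cases xs) force+
  have same_length: "length xs = length ys"
    using length_le[of xs ys] length_le[of ys xs] assms by (simp add: le_antisym)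
  then show ?thesis
  proof (rule nth_equalityI)
    fix i assume "i < length xs"
    then show "xs ! i = ys ! i"
      using assms(3)[of "Suc i"] same_length by (simp add: part_at_def)
  qed
qed

lemma partition_eqI_mset:
  assumes "is_partition xs" "is_partition ys" "mset xs = mset ys"
  shows "xs = ys"
proof -
  have "sorted (rev xs)" "sorted (rev ys)"
    using assms by (simp_all add: is_partition_def sorted_wrt_rev)
  then have "rev xs = rev ys"
    using assms(3) by (metis mset_rev properties_for_sort)
  then show ?thesis by simp
qed

lemma finite_partitions: "finite (partitions n)"
proof (rule finite_subset)
  have "length xs \<le> sum_list xs" if "\<forall>x\<in>set xs. 0 < x" for xs :: "nat list"
    using that by (induction xs) auto
  then show "partitions n \<subseteq> {xs. set xs \<subseteq> {0..n} \<and> length xs \<le> n}"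
    using member_le_sum_list by (fastforce simp: partitions_def is_partition_def)
  show "finite {xs. set xs \<subseteq> {0..n} \<and> length xs \<le> n}"
    by (rule finite_lists_length_le) simp
qed

lemma count_mset_from_mult:
  "count (mset (from_mult K m)) k = (if 1 \<le> k \<and> k \<le> K then m k else 0)"
  by (induction K) (auto simp: from_mult_def)

lemma sum_list_from_mult: "sum_list (from_mult K m) = (\<Sum>k=1..K. k * m k)"
  by (induction K) (auto simp: from_mult_def sum_list_replicate)

lemma length_from_mult: "length (from_mult K m) = (\<Sum>k=1..K. m k)"
  by (induction K) (auto simp: from_mult_def)

lemma is_partition_from_mult: "is_partition (from_mult K m)"
proof -
  have "sorted (concat (map (\<lambda>k. replicate (m k) k) [1..<K + 1]))"
    by (induction K) (auto simp: sorted_append)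
  then show ?thesis
    by (auto simp: is_partition_def from_mult_def sorted_wrt_rev)
qed

lemma sum_eq_sum_weighted_diffs:
  fixes a :: "nat \<Rightarrow> nat"
  assumes "\<And>i. 1 \<le> i \<Longrightarrow> a (Suc i) \<le> a i"
  shows "(\<Sum>i=1..M. a i) = (\<Sum>i=1..M. i * (a i - a (Suc i))) + M * a (Suc M)"
proof (induction M)
  case (Suc M)
  obtain e where "a (Suc M) = a (Suc (Suc M)) + e"
    using assms[of "Suc M"] le_Suc_ex by auto
  then show ?case using Suc by (simp add: algebra_simps)
qed simp

lemma telescope_antimono:
  fixes a :: "nat \<Rightarrow> nat"
  assumes "\<And>i. 1 \<le> i \<Longrightarrow> a (Suc i) \<le> a i" and "1 \<le> i"
  shows "a i = (\<Sum>l=i..<i+t. a l - a (Suc l)) + a (i+t)"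
proof (induction t)
  case (Suc t)
  have "a (Suc (i+t)) \<le> a (i+t)" using assms by simp
  then show ?case using Suc by simp
qed simp

lemma sum_split_odd_even:
  "(\<Sum>i=1..2*M+1. h i) = h 1 + (\<Sum>k=1..M. h (2*k) + h (2*k+1))" for h :: "nat \<Rightarrow> nat"
proof (induction M)
  case (Suc M)
  have "{1..2*Suc M+1} = insert (2*M+3) (insert (2*M+2) {1..2*M+1})" by auto
  then have "(\<Sum>i=1..2*Suc M+1. h i) = h (2*M+3) + h (2*M+2) + (\<Sum>i=1..2*M+1. h i)" by simp
  then show ?case using Suc by (simp add: algebra_simps)
qed simp

text \<open>a_l - a_(l+1) is the multiplicity of l in the conjugate partition.\<close>
definition conj_mult :: "nat list \<Rightarrow> nat \<Rightarrow> nat" where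
  "conj_mult xs l = part_at xs l - part_at xs (Suc l)"

lemma alpha_of_conj_mult: "alpha_of xs = from_mult (length xs) (\<lambda>k. conj_mult xs (2*k))"
  by (simp add: alpha_of_def conj_mult_def)

lemma beta_of_conj_mult: "beta_of xs = from_mult (length xs) (\<lambda>k. conj_mult xs (2*k+1))"
  by (simp add: beta_of_def conj_mult_def)

lemma count_mset_alpha_of: "count (mset (alpha_of xs)) k = conj_mult xs (2*k)"
  by (cases "k = 0")
    (auto simp: alpha_of_conj_mult count_mset_from_mult conj_mult_def part_at_beyond_length)

lemma count_mset_beta_of: "1 \<le> k \<Longrightarrow> count (mset (beta_of xs)) k = conj_mult xs (2*k+1)"
  by (auto simp: beta_of_conj_mult count_mset_from_mult conj_mult_def part_at_beyond_length)

lemma sum_list_eq_sum_part_at: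
  assumes "length xs \<le> M"
  shows "sum_list xs = (\<Sum>i=1..M. part_at xs i)"
proof -
  have "(\<Sum>i=1..M. part_at xs i) = (\<Sum>i=1..length xs. part_at xs i)"
    by (rule sum.mono_neutral_right) (use assms in \<open>auto simp: part_at_beyond_length\<close>)
  also have "\<dots> = (\<Sum>i=Suc 0..<Suc (length xs). part_at xs i)"
    by (simp add: atLeastLessThanSuc_atLeastAtMost)
  also have "\<dots> = (\<Sum>i=0..<length xs. part_at xs (Suc i))"
    by (rule sum.shift_bounds_Suc_ivl)
  also have "\<dots> = (\<Sum>i=0..<length xs. xs ! i)"
    by (simp add: part_at_def)
  finally show ?thesis by (simp add: sum_list_sum_nth)
qed

lemma sum_list_eq_sum_conj_mult:
  assumes "is_partition xs" "length xs \<le> M"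
  shows "sum_list xs = (\<Sum>l=1..M. l * conj_mult xs l)"
  using sum_eq_sum_weighted_diffs[of "part_at xs" M] part_at_antimono[OF assms(1)]
    part_at_beyond_length[of xs "Suc M"] assms(2)
  by (simp add: sum_list_eq_sum_part_at conj_mult_def)

lemma even_part_sum_eq_sum_conj_mult:
  assumes "is_partition xs" "length xs \<le> M"
  shows "even_part_sum xs = (\<Sum>k=1..M. k * (conj_mult xs (2*k) + conj_mult xs (2*k+1)))"
proof -
  have antimono: "part_at xs j \<le> part_at xs i" if "1 \<le> i" "i \<le> j" for i j
    using part_at_antimono[OF assms(1) that] .
  have "even_part_sum xs = (\<Sum>k=1..M. part_at xs (2*k))"
    unfolding even_part_sum_def
    by (rule sum.mono_neutral_left) (use assms(2) in \<open>auto simp: part_at_beyond_length\<close>)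
  also have "\<dots> = (\<Sum>k=1..M. k * (part_at xs (2*k) - part_at xs (2*k+2)))"
    using sum_eq_sum_weighted_diffs[of "\<lambda>k. part_at xs (2*k)" M] antimono
      part_at_beyond_length[of xs "2*M+2"] assms(2) by simp
  also have "\<dots> = (\<Sum>k=1..M. k * (conj_mult xs (2*k) + conj_mult xs (2*k+1)))"
    using antimono by (intro sum.cong) (auto simp: conj_mult_def)
  finally show ?thesis .
qed

lemma sum_list_alpha_beta_eq_even_part_sum:
  assumes "is_partition xs"
  shows "sum_list (alpha_of xs) + sum_list (beta_of xs) = even_part_sum xs"
  using even_part_sum_eq_sum_conj_mult[OF assms order_refl]
  by (simp add: alpha_of_conj_mult beta_of_conj_mult sum_list_from_mult
      sum.distrib[symmetric] algebra_simps)

lemma sum_list_eq_conj_mult_even_part_sum_beta: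
  assumes "is_partition xs"
  shows "sum_list xs = conj_mult xs 1 + 2 * even_part_sum xs + length (beta_of xs)"
proof -
  define r where "r = length xs"
  have "sum_list xs = (\<Sum>l=1..2*r+1. l * conj_mult xs l)"
    using sum_list_eq_sum_conj_mult[OF assms, of "2*r+1"] by (simp only: r_def)
  also have "\<dots> = conj_mult xs 1
      + (\<Sum>k=1..r. 2*k * conj_mult xs (2*k) + (2*k+1) * conj_mult xs (2*k+1))"
    unfolding sum_split_odd_even by simp
  also have "\<dots> = conj_mult xs 1 + 2 * (\<Sum>k=1..r. k * (conj_mult xs (2*k) + conj_mult xs (2*k+1)))
      + (\<Sum>k=1..r. conj_mult xs (2*k+1))"
    by (simp add: sum_distrib_left sum.distrib[symmetric] algebra_simps)
  finally show ?thesis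
    using even_part_sum_eq_sum_conj_mult[OF assms, of r]
    by (simp add: r_def beta_of_conj_mult length_from_mult)
qed

lemma part_at_eq_sum_conj_mult:
  assumes "is_partition xs" "1 \<le> i" "length xs < i + t"
  shows "part_at xs i = (\<Sum>l=i..<i+t. conj_mult xs l)"
  using telescope_antimono[of "part_at xs" i t] part_at_antimono[OF assms(1)] assms(2)
    part_at_beyond_length[OF assms(3)]
  by (simp add: conj_mult_def)

lemma partition_eqI_conj_mult:
  assumes "is_partition xs" "is_partition ys" "\<And>l. 1 \<le> l \<Longrightarrow> conj_mult xs l = conj_mult ys l"
  shows "xs = ys"
proof (rule partition_eqI_part_at[OF assms(1,2)])
  fix i :: nat assume i: "1 \<le> i"
  define t where "t = length xs + length ys + 1"
  have "part_at xs i = (\<Sum>l=i..<i+t. conj_mult xs l)" "part_at ys i = (\<Sum>l=i..<i+t. conj_mult ys l)"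
    using part_at_eq_sum_conj_mult[OF assms(1) i, of t] part_at_eq_sum_conj_mult[OF assms(2) i, of t]
    by (simp_all add: t_def)
  then show "part_at xs i = part_at ys i"
    using assms(3) i by simp
qed

lemma partition_with_part_at:
  fixes a :: "nat \<Rightarrow> nat"
  assumes "a 0 = 0" and antimono: "\<And>i. 1 \<le> i \<Longrightarrow> a (Suc i) \<le> a i"
    and "\<And>i. N \<le> i \<Longrightarrow> a i = 0"
  obtains xs where "is_partition xs" "part_at xs = a"
proof -
  define r where "r = (LEAST i. a (Suc i) = 0)"
  have a_Suc_r: "a (Suc r) = 0" unfolding r_def by (rule LeastI[of _ N]) (simp add: assms(3))
  have pos: "a (Suc i) \<noteq> 0" if "i < r" for i using not_less_Least[OF that[unfolded r_def]] .
  have le: "a i' \<le> a i" if "1 \<le> i" "i \<le> i'" for i i'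
    using that(2) by (induction i' rule: dec_induct) (use antimono that(1) order_trans in auto)
  define xs where "xs = map (\<lambda>i. a (Suc i)) [0..<r]"
  have "is_partition xs"
    using le pos by (auto simp: is_partition_def xs_def sorted_wrt_iff_nth_less)
  moreover have "part_at xs i = a i" for i
    using le[of "Suc r" i] a_Suc_r assms(1) by (cases "i = 0") (auto simp: part_at_def xs_def)
  ultimately show thesis using that by blast
qed

lemma partition_with_conj_mult:
  fixes d :: "nat \<Rightarrow> nat"
  assumes "\<And>l. N \<le> l \<Longrightarrow> d l = 0"
  obtains xs where "is_partition xs" "\<And>l. 1 \<le> l \<Longrightarrow> conj_mult xs l = d l"
proof -
  define a where "a i = (if i = 0 then 0 else \<Sum>l=i..<N. d l)" for i
  obtain xs where xs: "is_partition xs" "part_at xs = a"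
    by (rule partition_with_part_at[of a N]) (auto simp: a_def intro: sum_mono2)
  have "a l - a (Suc l) = d l" if "1 \<le> l" for l
    using that assms by (cases "l < N") (simp_all add: a_def sum.atLeast_Suc_lessThan)
  then show thesis using that xs by (simp add: conj_mult_def)
qed

lemma alpha_of_eqI:
  assumes "is_partition \<alpha>" "\<And>k. 1 \<le> k \<Longrightarrow> conj_mult xs (2*k) = count (mset \<alpha>) k"
  shows "alpha_of xs = \<alpha>"
proof (rule partition_eqI_mset)
  show "is_partition (alpha_of xs)" by (simp add: alpha_of_def is_partition_from_mult)
  show "mset (alpha_of xs) = mset \<alpha>"
  proof (rule multiset_eqI)
    fix k
    show "count (mset (alpha_of xs)) k = count (mset \<alpha>) k"
    proof (cases "k = 0")
      case True
      then show ?thesis using assms(1)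
        by (auto simp: alpha_of_conj_mult count_mset_from_mult is_partition_def count_eq_zero_iff)
    qed (use assms(2) in \<open>simp add: count_mset_alpha_of\<close>)
  qed
qed (fact assms(1))

lemma beta_of_eqI:
  assumes "is_partition \<beta>" "\<And>k. 1 \<le> k \<Longrightarrow> conj_mult xs (2*k+1) = count (mset \<beta>) k"
  shows "beta_of xs = \<beta>"
proof (rule partition_eqI_mset)
  show "is_partition (beta_of xs)" by (simp add: beta_of_def is_partition_from_mult)
  show "mset (beta_of xs) = mset \<beta>"
  proof (rule multiset_eqI)
    fix k
    show "count (mset (beta_of xs)) k = count (mset \<beta>) k"
    proof (cases "k = 0")
      case True
      then show ?thesis using assms(1)
        by (auto simp: beta_of_conj_mult count_mset_from_mult is_partition_def count_eq_zero_iff)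
    qed (use assms(2) in \<open>simp add: count_mset_beta_of\<close>)
  qed
qed (fact assms(1))

lemma alpha_beta_in_pair_target:
  assumes "xs \<in> F n j"
  shows "(alpha_of xs, beta_of xs) \<in> pair_target n j"
proof -
  have xs: "is_partition xs" "sum_list xs = n" "even_part_sum xs = j"
    using assms by (auto simp: F_def partitions_def)
  show ?thesis
    using sum_list_alpha_beta_eq_even_part_sum[OF xs(1)]
      sum_list_eq_conj_mult_even_part_sum_beta[OF xs(1)] xs(2,3)
    by (auto simp: pair_target_def alpha_of_def beta_of_def is_partition_from_mult)
qed

lemma inj_on_alpha_beta: "inj_on (\<lambda>xs. (alpha_of xs, beta_of xs)) (F n j)"
proof (rule inj_onI)
  fix xs ys
  assume "xs \<in> F n j" "ys \<in> F n j" and eq: "(alpha_of xs, beta_of xs) = (alpha_of ys, beta_of ys)"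
  then have xs: "is_partition xs" "sum_list xs = n" "even_part_sum xs = j"
    and ys: "is_partition ys" "sum_list ys = n" "even_part_sum ys = j"
    by (auto simp: F_def partitions_def)
  have "conj_mult xs l = conj_mult ys l" if "1 \<le> l" for l
  proof -
    consider "l = 1" | k where "1 \<le> k" "l = 2*k" | k where "1 \<le> k" "l = 2*k+1"
      using \<open>1 \<le> l\<close> by (cases "even l"; cases "l = 1") (auto elim!: evenE oddE)
    then show ?thesis
    proof cases
      case 1
      then show ?thesis
        using sum_list_eq_conj_mult_even_part_sum_beta[OF xs(1)]
          sum_list_eq_conj_mult_even_part_sum_beta[OF ys(1)] xs ys eq by simp
    next
      case 2
      then show ?thesis using count_mset_alpha_of[of xs k] count_mset_alpha_of[of ys k] eq by simp
    next
      case 3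
      then show ?thesis using count_mset_beta_of[of k xs] count_mset_beta_of[of k ys] eq by simp
    qed
  qed
  then show "xs = ys" by (rule partition_eqI_conj_mult[OF xs(1) ys(1)])
qed

lemma pair_target_subset_image_alpha_beta:
  assumes "2 * j \<le> n"
  shows "pair_target n j \<subseteq> (\<lambda>xs. (alpha_of xs, beta_of xs)) ` F n j"
proof clarify
  fix \<alpha> \<beta> assume "(\<alpha>, \<beta>) \<in> pair_target n j"
  then have \<alpha>: "is_partition \<alpha>" and \<beta>: "is_partition \<beta>"
    and sum: "sum_list \<alpha> + sum_list \<beta> = j" and len: "length \<beta> \<le> n - 2 * j"
    by (auto simp: pair_target_def)
  define d where "d l = (if l = 1 then n - 2 * j - length \<beta>
      else if even l then count (mset \<alpha>) (l div 2) else count (mset \<beta>) (l div 2))" for l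
  have "d l = 0" if "2 * j + 2 \<le> l" for l
  proof -
    have "k \<le> j" if "k \<in> set \<alpha> \<or> k \<in> set \<beta>" for k
      using that member_le_sum_list[of k \<alpha>] member_le_sum_list[of k \<beta>] sum by auto
    moreover have "j < l div 2" using \<open>2 * j + 2 \<le> l\<close> by auto
    ultimately show ?thesis using \<open>2 * j + 2 \<le> l\<close> by (force simp: d_def count_eq_zero_iff)
  qed
  then obtain xs where xs: "is_partition xs" and conj: "\<And>l. 1 \<le> l \<Longrightarrow> conj_mult xs l = d l"
    using partition_with_conj_mult by blast
  have "alpha_of xs = \<alpha>" by (rule alpha_of_eqI[OF \<alpha>]) (simp add: conj d_def)
  moreover have "beta_of xs = \<beta>" by (rule beta_of_eqI[OF \<beta>]) (simp add: conj d_def)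
  moreover have "even_part_sum xs = j"
    using sum_list_alpha_beta_eq_even_part_sum[OF xs] calculation sum by simp
  moreover have "sum_list xs = n"
    using sum_list_eq_conj_mult_even_part_sum_beta[OF xs] calculation conj[of 1] len assms
    by (simp add: d_def)
  ultimately show "(\<alpha>, \<beta>) \<in> (\<lambda>xs. (alpha_of xs, beta_of xs)) ` F n j"
    using xs by (force simp: F_def partitions_def)
qed

lemma bij_betw_alpha_beta:
  assumes "2 * j \<le> n"
  shows "bij_betw (\<lambda>xs. (alpha_of xs, beta_of xs)) (F n j) (pair_target n j)"
  unfolding bij_betw_def
  using inj_on_alpha_beta alpha_beta_in_pair_target pair_target_subset_image_alpha_beta[OF assms]
  by blast

lemma card_pair_target:
  "card (pair_target n j) = (\<Sum>i = 0..j. p i * p_at_most (j - i) (n - 2 * j))"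
proof -
  define B where "B i = {\<beta> \<in> partitions (j - i). length \<beta> \<le> n - 2 * j}" for i
  have "pair_target n j = (\<Union>i\<in>{0..j}. partitions i \<times> B i)"
    by (auto simp: pair_target_def partitions_def B_def)
  also have "card \<dots> = (\<Sum>i = 0..j. card (partitions i \<times> B i))"
  proof (rule card_UN_disjoint)
    show "\<forall>i\<in>{0..j}. finite (partitions i \<times> B i)" by (simp add: finite_partitions B_def)
    show "\<forall>i\<in>{0..j}. \<forall>k\<in>{0..j}. i \<noteq> k \<longrightarrow> partitions i \<times> B i \<inter> partitions k \<times> B k = {}"
      by (auto simp: partitions_def)
  qed simp
  also have "\<dots> = (\<Sum>i = 0..j. p i * p_at_most (j - i) (n - 2 * j))"
    by (simp add: card_cartesian_product p_def p_at_most_def B_def)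
  finally show ?thesis .
qed

theorem mainTheorem2:
  fixes n j :: nat
  assumes "2 * j \<le> n"
  shows "f n j = (\<Sum>i = 0..j. p i * p_at_most (j - i) (n - 2 * j))
     \<and> bij_betw (\<lambda>xs. (alpha_of xs, beta_of xs)) (F n j) (pair_target n j)"
proof -
  have bij: "bij_betw (\<lambda>xs. (alpha_of xs, beta_of xs)) (F n j) (pair_target n j)"
    by (rule bij_betw_alpha_beta[OF assms])
  then have "f n j = card (pair_target n j)"
    by (simp add: f_def bij_betw_same_card)
  with bij show ?thesis
    by (simp add: card_pair_target)
qed

end
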